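(* Let $G$ be a topological group, $A$ a topological $G$-module and $f\in C_c^n(G,A)$ a continuous homogeneous group $n$-cocycle (i.e. $df=0$). Then $j_v^n(f)$ and $j_h^n(i^n(f))$ are cohomologous in $\mathrm{Tot}\,A_{lc}^{*,*}(G,A)^G$, where $i^n\colon C_c^n(G,A)\hookrightarrow C_{lc}^n(G,A)$ is the inclusion.
   Context: A topological $G$-module is an abelian topological group $A$ with an action of $G$ by group automorphisms such that $G\times A\to A$ is continuous. For an identity neighbourhood $U$ of $G$ put $\Gamma_U^0:=G$ and, for $q\ge1$, $\Gamma_U^q:=\{(g_0,\dots,g_q)\in G^{q+1}\mid g_i^{-1}g_j\in U\ \forall i,j\}$. $G$ acts on maps $f\colon G^{n+1}\to A$ by $(g.f)(g_0,\dots,g_n)=g.f(g^{-1}g_0,\dots,g^{-1}g_n)$, and $df(g_0,\dots,g_{n+1})=\sum_i(-1)^if(g_0,\dots,\widehat{g_i},\dots,g_{n+1})$. $C_c^n(G,A)$ consists of continuous equivariant maps $G^{n+1}\to A$; $C_{lc}^n(G,A)$ of equivariant maps whose restriction to $\Gamma_U^n$ is continuous for some identity neighbourhood $U$. $A_{lc}^{p,q}(G,A)$ is the group of maps $f\colon G^{p+1}\times G^{q+1}\to A$ whose restriction to $G^{p+1}\times\Gamma_U^q$ is continuous for some identity neighbourhood $U$, with $d_hf(x_0,\dots,x_{p+1},\vec y)=\sum_i(-1)^if(x_0,\dots,\widehat{x_i},\dots,x_{p+1},\vec y)$ and $d_vf(\vec x,y_0,\dots,y_{q+1})=(-1)^p\sum_i(-1)^if(\vec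 x,y_0,\dots,\widehat{y_i},\dots,y_{q+1})$. $G$ acts by $(g.f)(\vec x,\vec y)=g.f(g^{-1}\vec x,g^{-1}\vec y)$, and $\mathrm{Tot}\,A_{lc}^{*,*}(G,A)^G$ is the total complex of the fixed-point double complex, $\mathrm{Tot}^n=\bigoplus_{p+q=n}A_{lc}^{p,q}(G,A)^G$ with differential $d_h+d_v$. The maps $j_h^n\colon C_{lc}^n(G,A)\to A_{lc}^{0,n}(G,A)^G$, $j_h(f)(x_0,\vec y)=f(\vec y)$, and $j_v^n\colon C_c^n(G,A)\to A_{lc}^{n,0}(G,A)^G$, $j_v(f)(\vec x,y_0)=f(\vec x)$, are chain maps into the total complex. *)

theory Defs
  imports "HOL-Analysis.Analysis"
begin

text \<open>The topological group G is a type of class topological_group_add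
 (a possibly NON-commutative group written additively: g h is g + h, g^-1 is - g,
 the identity is 0).
 A tuple (g_0,...,g_n) in G^(n+1) is an extensional function with domain {..n},
 i.e. an element of tup n = PiE {..n} (%_. UNIV), carrying the product topology.\<close>

definition topological_G_module :: "('g::topological_group_add \<Rightarrow> 'a::topological_ab_group_add \<Rightarrow> 'a) \<Rightarrow> bool" where
  "topological_G_module act \<longleftrightarrow>
     (\<forall>a. act 0 a = a) \<and>
     (\<forall>g h a. act (g + h) a = act g (act h a)) \<and>
     (\<forall>g a b. act g (a + b) = act g a + act g b) \<and>
     continuous_on UNIV (\<lambda>p. act (fst p) (snd p))"

definition tup :: "nat \<Rightarrow> (nat \<Rightarrow> 'g) set" where
  "tup n = PiE {..n} (\<lambda>_. UNIV)"

definition tuptop :: "nat \<Rightarrow> (nat \<Rightarrow> 'g::topological_space) topology" where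
  "tuptop n = product_topology (\<lambda>_. euclidean) {..n}"

definition id_nbhd :: "'g::topological_group_add set \<Rightarrow> bool" where
  "id_nbhd U \<longleftrightarrow> (\<exists>V. open V \<and> 0 \<in> V \<and> V \<subseteq> U)"

definition Gamma :: "'g::group_add set \<Rightarrow> nat \<Rightarrow> (nat \<Rightarrow> 'g) set" where
  "Gamma U q = (if q = 0 then tup 0
                else {x \<in> tup q. \<forall>i\<le>q. \<forall>j\<le>q. - x i + x j \<in> U})"

definition shift :: "nat \<Rightarrow> 'g::group_add \<Rightarrow> (nat \<Rightarrow> 'g) \<Rightarrow> (nat \<Rightarrow> 'g)" where
  "shift n h x = restrict (\<lambda>k. h + x k) {..n}"

definition face :: "nat \<Rightarrow> nat \<Rightarrow> (nat \<Rightarrow> 'g) \<Rightarrow> (nat \<Rightarrow> 'g)" where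
  "face n i x = restrict (\<lambda>k. if k < i then x k else x (Suc k)) {..n}"

definition sgn_pow :: "nat \<Rightarrow> 'a::ab_group_add \<Rightarrow> 'a" where
  "sgn_pow i a = (if even i then a else - a)"

definition hdiff :: "nat \<Rightarrow> ((nat \<Rightarrow> 'g) \<Rightarrow> 'a::ab_group_add) \<Rightarrow> (nat \<Rightarrow> 'g) \<Rightarrow> 'a" where
  "hdiff n f x = (\<Sum>i\<le>Suc n. sgn_pow i (f (face n i x)))"

definition Cc :: "('g::topological_group_add \<Rightarrow> 'a::topological_ab_group_add \<Rightarrow> 'a) \<Rightarrow> nat
                  \<Rightarrow> ((nat \<Rightarrow> 'g) \<Rightarrow> 'a) set" where
  "Cc act n = {f. continuous_map (tuptop n) euclidean f \<and>
                  (\<forall>g. \<forall>x\<in>tup n. act g (f (shift n (- g) x)) = f x)}"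

definition Clc :: "('g::topological_group_add \<Rightarrow> 'a::topological_ab_group_add \<Rightarrow> 'a) \<Rightarrow> nat
                  \<Rightarrow> ((nat \<Rightarrow> 'g) \<Rightarrow> 'a) set" where
  "Clc act n = {f. (\<exists>U. id_nbhd U \<and>
                      continuous_map (subtopology (tuptop n) (Gamma U n)) euclidean f) \<and>
                  (\<forall>g. \<forall>x\<in>tup n. act g (f (shift n (- g) x)) = f x)}"

definition incl :: "((nat \<Rightarrow> 'g) \<Rightarrow> 'a) \<Rightarrow> ((nat \<Rightarrow> 'g) \<Rightarrow> 'a)" where
  "incl f = f"

type_synonym ('g,'a) dcochain = "(nat \<Rightarrow> 'g) \<Rightarrow> (nat \<Rightarrow> 'g) \<Rightarrow> 'a"

definition Alc_inv :: "('g::topological_group_add \<Rightarrow> 'a::topological_ab_group_add \<Rightarrow> 'a)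
                        \<Rightarrow> nat \<Rightarrow> nat \<Rightarrow> ('g,'a) dcochain set" where
  "Alc_inv act p q = {f. (\<exists>U. id_nbhd U \<and>
        continuous_map (subtopology (prod_topology (tuptop p) (tuptop q)) (tup p \<times> Gamma U q))
                       euclidean (\<lambda>z. f (fst z) (snd z))) \<and>
        (\<forall>g. \<forall>x\<in>tup p. \<forall>y\<in>tup q. act g (f (shift p (- g) x) (shift q (- g) y)) = f x y)}"

definition d_h :: "nat \<Rightarrow> ('g,'a::ab_group_add) dcochain \<Rightarrow> ('g,'a) dcochain" where
  "d_h p f x y = (\<Sum>i\<le>Suc p. sgn_pow i (f (face p i x) y))"

definition d_v :: "nat \<Rightarrow> nat \<Rightarrow> ('g,'a::ab_group_add) dcochain \<Rightarrow> ('g,'a) dcochain" where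
  "d_v p q f x y = sgn_pow p (\<Sum>i\<le>Suc q. sgn_pow i (f x (face q i y)))"

definition Tot :: "('g::topological_group_add \<Rightarrow> 'a::topological_ab_group_add \<Rightarrow> 'a)
                   \<Rightarrow> nat \<Rightarrow> (nat \<Rightarrow> ('g,'a) dcochain) set" where
  "Tot act n = {c. \<forall>p\<le>n. c p \<in> Alc_inv act p (n - p)}"

definition totD :: "nat \<Rightarrow> (nat \<Rightarrow> ('g,'a::ab_group_add) dcochain) \<Rightarrow> (nat \<Rightarrow> ('g,'a) dcochain)" where
  "totD n c p = (\<lambda>x y. (if p = 0 then 0 else d_h (p - 1) (c (p - 1)) x y)
                     + (if p \<le> n then d_v p (n - p) (c p) x y else 0))"

definition j_h :: "nat \<Rightarrow> ((nat \<Rightarrow> 'g) \<Rightarrow> 'a::ab_group_add) \<Rightarrow> (nat \<Rightarrow> ('g,'a) dcochain)" where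
  "j_h n f p = (if p = 0 then (\<lambda>x y. f y) else (\<lambda>x y. 0))"

definition j_v :: "nat \<Rightarrow> ((nat \<Rightarrow> 'g) \<Rightarrow> 'a::ab_group_add) \<Rightarrow> (nat \<Rightarrow> ('g,'a) dcochain)" where
  "j_v n f p = (if p = n then (\<lambda>x y. f x) else (\<lambda>x y. 0))"

text \<open>Two elements of Tot^n are cohomologous if their difference is D of an element of
 Tot^(n-1) (with Tot^(-1) = 0).  Components are compared on their domains
 G^(p+1) x G^(n-p+1).\<close>
definition cohomologous :: "('g::topological_group_add \<Rightarrow> 'a::topological_ab_group_add \<Rightarrow> 'a)
                   \<Rightarrow> nat \<Rightarrow> (nat \<Rightarrow> ('g,'a) dcochain) \<Rightarrow> (nat \<Rightarrow> ('g,'a) dcochain) \<Rightarrow> bool" where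
  "cohomologous act n a b \<longleftrightarrow>
     (if n = 0 then (\<forall>x\<in>tup 0. \<forall>y\<in>tup 0. a 0 x y = b 0 x y)
      else (\<exists>c\<in>Tot act (n - 1). \<forall>p\<le>n. \<forall>x\<in>tup p. \<forall>y\<in>tup (n - p).
              a p x y - b p x y = totD (n - 1) c p x y))"

end

theory Submission
  imports Defs
begin

text \<open>Write x\<cdot>y for the concatenation of x \<in> G^(p+1) and y \<in> G^(q+1).  The contracting
 homotopy is c_p(x,y) = (-1)^(p+1) f(x\<cdot>y).  Faces of x\<cdot>y deleting an entry of x are the
 horizontal faces, those deleting an entry of y the vertical ones, so the p-th component of
 D c is, up to sign, the cocycle identity (d f)(x\<cdot>y) = 0 split at position p.  In the
 extreme components p = 0 and p = n the split leaves the single terms f(y) and f(x), which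
 are exactly j_h(f) and j_v(f).  Invariance and continuity of c are inherited from f.\<close>

lemma sgn_pow_Suc: "sgn_pow (Suc i) a = - sgn_pow i a"
  by (simp add: sgn_pow_def)

lemma sgn_pow_zero [simp]: "sgn_pow i (0::'a::ab_group_add) = 0"
  by (simp add: sgn_pow_def)

lemma sgn_pow_add: "sgn_pow (i + j) (a::'a::ab_group_add) = sgn_pow i (sgn_pow j a)"
  by (simp add: sgn_pow_def)

lemma sgn_pow_plus: "sgn_pow i ((a::'a::ab_group_add) + b) = sgn_pow i a + sgn_pow i b"
  by (simp add: sgn_pow_def)

lemma sgn_pow_sum: "sgn_pow i (sum g S) = (\<Sum>x\<in>S. sgn_pow i (g x :: 'a::ab_group_add))"
  by (simp add: sgn_pow_def sum_negf)

lemma sgn_pow_commute: "sgn_pow i (sgn_pow j (a::'a::ab_group_add)) = sgn_pow j (sgn_pow i a)"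
  by (simp add: sgn_pow_def)

lemma sgn_pow_sgn_pow_same [simp]: "sgn_pow i (sgn_pow i (a::'a::ab_group_add)) = a"
  by (simp add: sgn_pow_def)

lemma continuous_map_sgn_pow:
  fixes g :: "'b \<Rightarrow> 'a::topological_ab_group_add"
  assumes "continuous_map X euclidean g"
  shows "continuous_map X euclidean (\<lambda>z. sgn_pow i (g z))"
proof -
  have "continuous_map X euclidean (\<lambda>z. - g z)"
    using continuous_map_compose[OF assms, of euclidean uminus]
    by (simp add: o_def continuous_on_minus continuous_on_id)
  then show ?thesis
    using assms by (simp add: sgn_pow_def)
qed

lemma topological_G_module_act_sgn_pow:
  assumes "topological_G_module act"
  shows "act g (sgn_pow i a) = sgn_pow i (act g a)"
proof -
  have "act g (- a) = - act g a"
    using assms by (simp add: topological_G_module_def additive.minus additive.intro)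
  then show ?thesis
    by (simp add: sgn_pow_def)
qed

lemma sum_atMost_Suc_split:
  fixes g :: "nat \<Rightarrow> 'a::ab_group_add"
  assumes "p \<le> n"
  shows "(\<Sum>j\<le>Suc n. g j) = (\<Sum>j\<le>p. g j) + (\<Sum>i\<le>n - p. g (Suc p + i))"
proof -
  obtain k where "n = p + k"
    using assms le_Suc_ex by blast
  moreover have "(\<Sum>j\<le>Suc (p + k). g j) = (\<Sum>j\<le>p. g j) + (\<Sum>i\<le>k. g (Suc p + i))"
    by (induction k) (simp_all add: add.assoc)
  ultimately show ?thesis
    by simp
qed

definition tup_append :: "nat \<Rightarrow> nat \<Rightarrow> (nat \<Rightarrow> 'g) \<Rightarrow> (nat \<Rightarrow> 'g) \<Rightarrow> (nat \<Rightarrow> 'g)" where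
  "tup_append p q x y = restrict (\<lambda>k. if k \<le> p then x k else y (k - Suc p)) {..p + q + 1}"

lemma tup_append_in_tup: "tup_append p q x y \<in> tup (p + q + 1)"
  by (simp add: tup_append_def tup_def)

lemma face_tup_append_left:
  assumes "i \<le> Suc p"
  shows "tup_append p q (face p i x) y = face (p + q + 1) i (tup_append (Suc p) q x y)"
  using assms by (auto simp: tup_append_def face_def fun_eq_iff)

lemma face_tup_append_right:
  assumes "i \<le> Suc q"
  shows "tup_append p q x (face q i y) = face (p + q + 1) (Suc p + i) (tup_append p (Suc q) x y)"
  using assms by (auto simp: tup_append_def face_def fun_eq_iff intro!: arg_cong[where f = y])

lemma face_first_tup_append:
  assumes "y \<in> tup n"
  shows "face n 0 (tup_append 0 n x y) = y"
  using assms by (auto simp: tup_append_def face_def fun_eq_iff tup_def PiE_def extensional_def)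

lemma face_last_tup_append:
  assumes "x \<in> tup n"
  shows "face n (Suc n) (tup_append n 0 x y) = x"
  using assms by (auto simp: tup_append_def face_def fun_eq_iff tup_def PiE_def extensional_def)

lemma shift_tup_append:
  "shift (p + q + 1) h (tup_append p q x y) = tup_append p q (shift p h x) (shift q h y)"
  by (auto simp: tup_append_def shift_def fun_eq_iff)

lemma continuous_map_tup_append:
  "continuous_map (prod_topology (tuptop p) (tuptop q)) (tuptop (p + q + 1))
     (\<lambda>z. tup_append p q (fst z) (snd z))"
  unfolding tuptop_def continuous_map_componentwise
proof (intro conjI ballI)
  fix k assume k: "k \<in> {..p + q + 1}"
  let ?X = "prod_topology (product_topology (\<lambda>_. euclidean) {..p})
                          (product_topology (\<lambda>_. euclidean :: 'a topology) {..q})"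
  have left: "continuous_map ?X euclidean (\<lambda>z. fst z k)" if "k \<le> p"
    using that
    by (intro continuous_map_compose[OF continuous_map_fst continuous_map_product_projection,
          unfolded o_def]) simp
  have right: "continuous_map ?X euclidean (\<lambda>z. snd z (k - Suc p))" if "\<not> k \<le> p"
    using that k
    by (intro continuous_map_compose[OF continuous_map_snd continuous_map_product_projection,
          unfolded o_def]) simp
  show "continuous_map ?X euclidean (\<lambda>z. tup_append p q (fst z) (snd z) k)"
    using k left right by (cases "k \<le> p") (simp_all add: tup_append_def)
qed (auto simp: tup_append_def)

definition append_homotopy :: "nat \<Rightarrow> ((nat \<Rightarrow> 'g) \<Rightarrow> 'a::ab_group_add) \<Rightarrow> nat \<Rightarrow> ('g,'a) dcochain"
  where "append_homotopy m f p x y = sgn_pow (Suc p) (f (tup_append p (m - p) x y))"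

lemma append_homotopy_in_Tot:
  fixes act :: "'g::topological_group_add \<Rightarrow> 'a::topological_ab_group_add \<Rightarrow> 'a"
  assumes act: "topological_G_module act" and f: "f \<in> Cc act (Suc m)"
  shows "append_homotopy m f \<in> Tot act m"
  unfolding Tot_def
proof (intro CollectI allI impI)
  fix p assume "p \<le> m"
  then have deg: "p + (m - p) + 1 = Suc m"
    by simp
  have "continuous_map (tuptop (p + (m - p) + 1)) euclidean f"
    unfolding deg using f by (simp add: Cc_def)
  then have "continuous_map (prod_topology (tuptop p) (tuptop (m - p))) euclidean
               (f \<circ> (\<lambda>z. tup_append p (m - p) (fst z) (snd z)))"
    by (rule continuous_map_compose[OF continuous_map_tup_append])
  then have "continuous_map (prod_topology (tuptop p) (tuptop (m - p))) euclidean
               (\<lambda>z. append_homotopy m f p (fst z) (snd z))"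
    using continuous_map_sgn_pow by (fastforce simp: append_homotopy_def o_def)
  then have "continuous_map (subtopology (prod_topology (tuptop p) (tuptop (m - p)))
               (tup p \<times> Gamma UNIV (m - p))) euclidean (\<lambda>z. append_homotopy m f p (fst z) (snd z))"
    by (rule continuous_map_from_subtopology)
  moreover have "id_nbhd (UNIV :: 'g set)"
    by (auto simp: id_nbhd_def)
  moreover have "act g (append_homotopy m f p (shift p (- g) x) (shift (m - p) (- g) y))
                   = append_homotopy m f p x y" for g x y
    using f tup_append_in_tup[of p "m - p" x y] deg
    by (simp add: append_homotopy_def Cc_def topological_G_module_act_sgn_pow[OF act]
                  flip: shift_tup_append)
  ultimately show "append_homotopy m f p \<in> Alc_inv act p (m - p)"
    unfolding Alc_inv_def by blast
qed

lemma d_h_append_homotopy: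
  assumes "1 \<le> p" "p \<le> Suc m"
  shows "d_h (p - 1) (append_homotopy m f (p - 1)) x y
           = sgn_pow p (\<Sum>i\<le>p. sgn_pow i (f (face (Suc m) i (tup_append p (Suc m - p) x y))))"
proof -
  obtain k where p: "p = Suc k"
    using assms(1) by (cases p) auto
  have "tup_append k (m - k) (face k i x) y = face (Suc m) i (tup_append p (Suc m - p) x y)"
    if "i \<le> Suc k" for i
    using face_tup_append_left[OF that, of "m - k" x y] assms(2) p by simp
  then show ?thesis
    by (simp add: d_h_def append_homotopy_def p sgn_pow_sum sgn_pow_commute del: sum.atMost_Suc)
qed

lemma d_v_append_homotopy:
  assumes "p \<le> m"
  shows "d_v p (m - p) (append_homotopy m f p) x y
           = sgn_pow p (\<Sum>i\<le>Suc m - p. sgn_pow (Suc p + i)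
                          (f (face (Suc m) (Suc p + i) (tup_append p (Suc m - p) x y))))"
proof -
  have deg: "Suc (m - p) = Suc m - p"
    using assms by simp
  have "tup_append p (m - p) x (face (m - p) i y)
          = face (Suc m) (Suc p + i) (tup_append p (Suc m - p) x y)" if "i \<le> Suc (m - p)" for i
    using face_tup_append_right[OF that, of p x y] assms deg by simp
  then show ?thesis
    using deg by (simp add: d_v_def append_homotopy_def sgn_pow_add[symmetric] add.commute)
qed

lemma totD_append_homotopy:
  fixes f :: "(nat \<Rightarrow> 'g) \<Rightarrow> 'a::ab_group_add"
  assumes cocycle: "\<forall>z\<in>tup (Suc n). hdiff n f z = 0"
    and n: "n = Suc m" and p: "p \<le> n" and x: "x \<in> tup p" and y: "y \<in> tup (n - p)"
  shows "totD m (append_homotopy m f) p x y = j_v n f p x y - j_h n f p x y"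
proof -
  define s where "s j = sgn_pow j (f (face n j (tup_append p (n - p) x y)))" for j
  define S where "S = (\<Sum>j\<le>p. s j)"
  define T where "T = (\<Sum>i\<le>n - p. s (Suc p + i))"
  have "tup_append p (n - p) x y \<in> tup (Suc n)"
    using tup_append_in_tup[of p "n - p" x y] p by simp
  then have split: "S + T = 0"
    using cocycle sum_atMost_Suc_split[OF p, of s] by (simp add: hdiff_def s_def S_def T_def)
  have H: "d_h (p - 1) (append_homotopy m f (p - 1)) x y = sgn_pow p S" if "p \<noteq> 0"
    using d_h_append_homotopy[of p m f x y] that p n by (simp add: s_def S_def)
  have V: "d_v p (m - p) (append_homotopy m f p) x y = sgn_pow p T" if "p \<noteq> n"
    using d_v_append_homotopy[of p m f x y] that p n by (simp add: s_def T_def)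
  consider "p = 0" | "p = n" | "p \<noteq> 0" "p \<noteq> n"
    by blast
  then show ?thesis
  proof cases
    case 1
    have "T = - s 0"
      using split 1 by (simp add: S_def eq_neg_iff_add_eq_0 add.commute)
    moreover have "s 0 = f y"
      using face_first_tup_append[of y n x] y 1 by (simp add: s_def sgn_pow_def)
    ultimately show ?thesis
      using 1 n V by (simp add: totD_def j_v_def j_h_def sgn_pow_def)
  next
    case 2
    have "S = - s (Suc n)"
      using split 2 by (simp add: T_def eq_neg_iff_add_eq_0)
    moreover have "s (Suc n) = - sgn_pow n (f x)"
      using face_last_tup_append[of x n y] x 2 by (simp add: s_def sgn_pow_Suc)
    ultimately show ?thesis
      using 2 n H by (simp add: totD_def j_v_def j_h_def)
  next
    case 3
    then show ?thesis
      using p n H V split by (simp add: totD_def j_v_def j_h_def flip: sgn_pow_plus)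
  qed
qed

lemma cocycle_degree_0_const:
  assumes "\<forall>z\<in>tup (Suc 0). hdiff 0 f z = 0" and "x \<in> tup 0" and "y \<in> tup 0"
  shows "f x = f y"
proof -
  have "hdiff 0 f (tup_append 0 0 x y) = f y - f x"
    using face_first_tup_append[OF assms(3)] face_last_tup_append[OF assms(2)]
    by (simp add: hdiff_def sgn_pow_def)
  then show ?thesis
    using assms(1) tup_append_in_tup[of 0 0 x y] by simp
qed

theorem mainTheorem4:
  fixes act :: "'g::topological_group_add \<Rightarrow> 'a::topological_ab_group_add \<Rightarrow> 'a"
    and f :: "(nat \<Rightarrow> 'g) \<Rightarrow> 'a"
    and n :: nat
  assumes "topological_G_module act"
    and "f \<in> Cc act n"
    and "\<forall>x\<in>tup (Suc n). hdiff n f x = 0"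
  shows "cohomologous act n (j_v n f) (j_h n (incl f))"
proof (cases n)
  case 0
  have "j_v 0 f 0 x y = j_h 0 (incl f) 0 x y" if "x \<in> tup 0" "y \<in> tup 0" for x y
    using cocycle_degree_0_const[of f x y] assms(3) that 0 by (simp add: j_v_def j_h_def incl_def)
  then show ?thesis
    unfolding cohomologous_def using 0 by simp
next
  case (Suc m)
  have "append_homotopy m f \<in> Tot act (n - 1)"
    using append_homotopy_in_Tot assms(1,2) Suc by simp
  moreover have "\<forall>p\<le>n. \<forall>x\<in>tup p. \<forall>y\<in>tup (n - p).
      j_v n f p x y - j_h n (incl f) p x y = totD (n - 1) (append_homotopy m f) p x y"
    using totD_append_homotopy[OF assms(3) Suc] Suc by (simp add: incl_def)
  moreover have "n \<noteq> 0"
    using Suc by simp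
  ultimately show ?thesis
    unfolding cohomologous_def by (simp only: if_False) blast
qed

end
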